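(* Let $\mathcal{M}$ be an MDP (a stochastic game in which only one player has vertices) with vertex set $V$ and a priority function $\Omega_1:V\to\mathbb{N}$, and let $\psi=\mathsf{Parity}(\Omega_1)$. Suppose $\mathsf{Pr}_v^{\sigma}(\psi)=1$ for all vertices $v\in V$ and all strategies $\sigma$ of the player. Let $p$ be an odd priority in the range of $\Omega_1$. Then for every $\epsilon>0$ there exists $N_\epsilon\in\mathbb{N}$ such that for all strategies $\sigma$ and all vertices $v$, $\mathsf{Pr}_v^{\sigma}(\mathsf{Unlucky}(p,N_\epsilon))<\epsilon$.
   Context: A stochastic game $\langle V,(V_1,V_2,V_\Diamond),E,\delta\rangle$ has a finite vertex set $V$ partitioned into Player-1, Player-2 and probabilistic vertices, an edge set $E\subseteq V\times V$ in which every vertex has at least one successor, and $\delta:V_\Diamond\to\mathcal{D}(V)$ giving for each probabilistic vertex a probability distribution whose support is exactly its set of successors. An MDP is a stochastic game where one of $V_1,V_2$ is empty. A play is an infinite path; a strategy for Player $i$ maps each history (finite path) ending in a $V_i$ vertex to a successor of its last vertex. $\mathsf{Pr}_v^{\sigma}$ denotes the induced probability measure on plays from $v$. $\mathsf{Parity}(\Omega)$ is the set of plays $v_0v_1\dots$ with $\limsup_j\Omega(v_j)$ even. For a play $\rho$, $\pi_{\Omega_1\ge p}(\rho)$ is the sequence $\Omega_1(\rho)$ with all priorities smaller than $p$ removed. $\mathsf{Unlucky}(p,N)$ is the set of plays $\rho$ such that the first $N$ elements of $\pi_{\Omega_1\ge p}(\rho)$ exist and are all equal to $p$ (i.e. at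 least $N$ priorities $\ge p$ occur and the first $N$ of them equal $p$). *)

theory Defs
  imports "HOL-Probability.Probability"
begin

text \<open>Markov decision processes (stochastic games with only one player) over a finite
  vertex type 'v (so V = UNIV).  V1 are the player's vertices, all other vertices are
  probabilistic; E is the edge relation and delta the distributions at probabilistic vertices.\<close>

definition mdp :: "('v::finite \<times> 'v) set \<Rightarrow> 'v set \<Rightarrow> ('v \<Rightarrow> 'v pmf) \<Rightarrow> bool" where
  "mdp E V1 \<delta> \<longleftrightarrow>
     (\<forall>u. \<exists>w. (u, w) \<in> E) \<and>
     (\<forall>u. u \<notin> V1 \<longrightarrow> set_pmf (\<delta> u) = {w. (u, w) \<in> E})"

definition history :: "('v \<times> 'v) set \<Rightarrow> 'v list \<Rightarrow> bool" where
  "history E h \<longleftrightarrow> h \<noteq> [] \<and> (\<forall>i. Suc i < length h \<longrightarrow> (h ! i, h ! Suc i) \<in> E)"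

text \<open>A strategy maps each history ending in a player vertex to a successor of its last vertex
  (its values on other lists are irrelevant).\<close>
definition strategy :: "('v \<times> 'v) set \<Rightarrow> 'v set \<Rightarrow> ('v list \<Rightarrow> 'v) \<Rightarrow> bool" where
  "strategy E V1 \<sigma> \<longleftrightarrow> (\<forall>h. history E h \<and> last h \<in> V1 \<longrightarrow> (last h, \<sigma> h) \<in> E)"

text \<open>One-step kernel: given the first i vertices of the play, the distribution of vertex i.\<close>
definition step_kernel ::
  "'v set \<Rightarrow> ('v \<Rightarrow> 'v pmf) \<Rightarrow> ('v list \<Rightarrow> 'v) \<Rightarrow> 'v \<Rightarrow> nat \<Rightarrow> (nat \<Rightarrow> 'v) \<Rightarrow> 'v measure" where
  "step_kernel V1 \<delta> \<sigma> v i \<omega> = measure_pmf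
     (if i = 0 then return_pmf v
      else (let h = map \<omega> [0..<i] in
            if last h \<in> V1 then return_pmf (\<sigma> h) else \<delta> (last h)))"

text \<open>The probability measure Pr_v^sigma on plays (nat \<Rightarrow> 'v), obtained by the
  Ionescu-Tulcea construction from the one-step kernels.\<close>
definition play_measure ::
  "'v set \<Rightarrow> ('v \<Rightarrow> 'v pmf) \<Rightarrow> ('v list \<Rightarrow> 'v) \<Rightarrow> 'v \<Rightarrow> (nat \<Rightarrow> 'v) measure" where
  "play_measure V1 \<delta> \<sigma> v =
     projective_family.lim UNIV
       (Ionescu_Tulcea.CI (step_kernel V1 \<delta> \<sigma> v) (\<lambda>_. count_space UNIV))
       (\<lambda>_. count_space UNIV)"

definition nat_limsup :: "(nat \<Rightarrow> nat) \<Rightarrow> nat" where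
  "nat_limsup f = (LEAST b. eventually (\<lambda>j. f j \<le> b) sequentially)"

definition Parity :: "('v \<Rightarrow> nat) \<Rightarrow> (nat \<Rightarrow> 'v) set" where
  "Parity \<Omega> = {\<rho>. even (nat_limsup (\<lambda>j. \<Omega> (\<rho> j)))}"

definition prio_filter_prefix :: "('v \<Rightarrow> nat) \<Rightarrow> nat \<Rightarrow> (nat \<Rightarrow> 'v) \<Rightarrow> nat \<Rightarrow> nat list" where
  "prio_filter_prefix \<Omega> p \<rho> k = filter (\<lambda>q. p \<le> q) (map (\<lambda>j. \<Omega> (\<rho> j)) [0..<k])"

definition Unlucky :: "('v \<Rightarrow> nat) \<Rightarrow> nat \<Rightarrow> nat \<Rightarrow> (nat \<Rightarrow> 'v) set" where
  "Unlucky \<Omega> p N = {\<rho>. \<exists>k. N \<le> length (prio_filter_prefix \<Omega> p \<rho> k) \<and>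
                          take N (prio_filter_prefix \<Omega> p \<rho> k) = replicate N p}"

end

theory Submission
  imports Defs
begin

text \<open>Value iteration gives, for every N, the best probability val_sup N u of seeing N
  visits to priority p before any larger priority; it decreases in N to a limit val_lim.
  If that limit were positive somewhere, the vertices where it is maximal would form a trap:
  the player can keep the play there forever, no priority above p occurs, and p stays reachable.
  A positional strategy walking towards p inside the trap then makes the odd priority p the
  limsup almost surely, contradicting the almost-sure parity objective. So val_lim vanishes,
  and as there are finitely many vertices, a single N makes all val_sup N u small at once,
  which bounds the probability of Unlucky(p, N + 1) uniformly in the strategy.\<close>

section \<open>Plays as iterated distributions\<close>

definition next_pmf :: "'v set \<Rightarrow> ('v \<Rightarrow> 'v pmf) \<Rightarrow> ('v list \<Rightarrow> 'v) \<Rightarrow> 'v \<Rightarrow> 'v list \<Rightarrow> 'v pmf" where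
  "next_pmf V1 \<delta> \<sigma> v h =
     (if h = [] then return_pmf v else if last h \<in> V1 then return_pmf (\<sigma> h) else \<delta> (last h))"

primrec future_pmf ::
  "'v set \<Rightarrow> ('v \<Rightarrow> 'v pmf) \<Rightarrow> ('v list \<Rightarrow> 'v) \<Rightarrow> 'v \<Rightarrow> 'v list \<Rightarrow> nat \<Rightarrow> 'v list pmf" where
  "future_pmf V1 \<delta> \<sigma> v h 0 = return_pmf []"
| "future_pmf V1 \<delta> \<sigma> v h (Suc l) =
     next_pmf V1 \<delta> \<sigma> v h \<bind> (\<lambda>x. map_pmf (Cons x) (future_pmf V1 \<delta> \<sigma> v (h @ [x]) l))"

lemma step_kernel_eq_next_pmf:
  "step_kernel V1 \<delta> \<sigma> v i \<omega> = measure_pmf (next_pmf V1 \<delta> \<sigma> v (map \<omega> [0..<i]))"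
  unfolding step_kernel_def next_pmf_def Let_def by auto

lemma map_append_future_pmf_Suc:
  "map_pmf (append h) (future_pmf V1 \<delta> \<sigma> v h (Suc l)) =
     next_pmf V1 \<delta> \<sigma> v h \<bind> (\<lambda>x. map_pmf (append (h @ [x])) (future_pmf V1 \<delta> \<sigma> v (h @ [x]) l))"
  by (auto simp: map_bind_pmf pmf.map_comp comp_def intro!: bind_pmf_cong pmf.map_cong)

lemma future_pmf_Nil_Suc:
  "future_pmf V1 \<delta> \<sigma> v [] (Suc k) = map_pmf (Cons v) (future_pmf V1 \<delta> \<sigma> v [v] k)"
  by (simp add: next_pmf_def bind_return_pmf)

lemma measurable_prefix:
  assumes "{0..<n} \<subseteq> J"
  shows "(\<lambda>\<omega>. map \<omega> [0..<n])
    \<in> measurable (PiM J (\<lambda>_. count_space (UNIV::'v::countable set))) (count_space UNIV)"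
  using assms
proof (induction n)
  case (Suc n)
  have "(\<lambda>\<omega>. h @ [\<omega> n])
      \<in> measurable (PiM J (\<lambda>_. count_space (UNIV::'v set))) (count_space UNIV)" for h
    using Suc.prems by (intro measurable_compose[OF measurable_component_singleton]) auto
  then have "(\<lambda>\<omega>. (\<lambda>h \<omega>. h @ [\<omega> n]) (map \<omega> [0..<n]) \<omega>)
      \<in> measurable (PiM J (\<lambda>_. count_space (UNIV::'v set))) (count_space UNIV)"
    by (rule measurable_compose_countable[OF _ Suc.IH]) (use Suc.prems in auto)
  then show ?case by simp
qed simp

lemma Ionescu_Tulcea_step_kernel:
  fixes \<delta> :: "'v::finite \<Rightarrow> 'v pmf"
  shows "Ionescu_Tulcea (step_kernel V1 \<delta> \<sigma> v) (\<lambda>_. count_space UNIV)"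
proof (rule Ionescu_Tulcea.intro)
  fix i
  have "(\<lambda>\<omega>. measure_pmf (next_pmf V1 \<delta> \<sigma> v (map \<omega> [0..<i])))
      \<in> measurable (PiM {0..<i} (\<lambda>_. count_space UNIV)) (subprob_algebra (count_space UNIV))"
    by (rule measurable_compose[OF measurable_prefix])
       (auto simp: measurable_count_space_eq1 measure_pmf_in_subprob_algebra)
  then show "step_kernel V1 \<delta> \<sigma> v i
      \<in> measurable (PiM {0..<i} (\<lambda>_. count_space UNIV)) (subprob_algebra (count_space UNIV))"
    by (simp add: step_kernel_eq_next_pmf[abs_def])
qed (simp add: step_kernel_eq_next_pmf prob_space_measure_pmf)

lemma (in Ionescu_Tulcea) C_Suc:
  assumes "\<omega> \<in> space (PiM {0..<n} M)"
  shows "C n (Suc l) \<omega> = eP n \<omega> \<bind> C (Suc n) l"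
proof -
  have "C n 1 \<omega> = eP n \<omega>"
    using assms by (simp add: bind_return[OF measurable_eP])
  then show ?thesis
    using split_C[OF assms, of 1 l] by (simp del: C.simps)
qed

lemma distr_C_prefix:
  fixes \<delta> :: "'v::finite \<Rightarrow> 'v pmf"
  assumes "\<omega> \<in> space (PiM {0..<n} (\<lambda>_. count_space UNIV))"
  shows "distr (Ionescu_Tulcea.C (step_kernel V1 \<delta> \<sigma> v) (\<lambda>_. count_space UNIV) n l \<omega>)
           (count_space UNIV) (\<lambda>\<omega>'. map \<omega>' [0..<n+l])
         = measure_pmf (map_pmf (append (map \<omega> [0..<n])) (future_pmf V1 \<delta> \<sigma> v (map \<omega> [0..<n]) l))"
  using assms
proof (induction l arbitrary: n \<omega>)
  case 0
  interpret Ionescu_Tulcea "step_kernel V1 \<delta> \<sigma> v" "\<lambda>_. count_space UNIV"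
    by (rule Ionescu_Tulcea_step_kernel)
  show ?case
    using "0" by (simp add: distr_return measurable_prefix return_pmf.rep_eq)
next
  case (Suc l)
  interpret Ionescu_Tulcea "step_kernel V1 \<delta> \<sigma> v" "\<lambda>_. count_space UNIV"
    by (rule Ionescu_Tulcea_step_kernel)
  let ?pre = "\<lambda>m \<omega>'. map \<omega>' [0..<m]"
  have "distr (C n (Suc l) \<omega>) (count_space UNIV) (?pre (n + Suc l))
      = eP n \<omega> \<bind> (\<lambda>\<omega>'. distr (C (Suc n) l \<omega>') (count_space UNIV) (?pre (n + Suc l)))"
    unfolding C_Suc[OF Suc.prems]
  proof (rule distr_bind)
    show "C (Suc n) l
        \<in> measurable (eP n \<omega>) (subprob_algebra (PiM {0..<Suc n + l} (\<lambda>_. count_space UNIV)))"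
      by (subst measurable_cong_sets[OF sets_eP[OF Suc.prems] refl]) (rule measurable_C)
    show "space (eP n \<omega>) \<noteq> {}"
      using prob_space.not_empty[OF prob_space_eP[OF Suc.prems]] .
  qed (rule measurable_prefix, simp)
  also have "\<dots> = eP n \<omega> \<bind> (\<lambda>\<omega>'. measure_pmf (map_pmf (append (?pre (Suc n) \<omega>'))
                    (future_pmf V1 \<delta> \<sigma> v (?pre (Suc n) \<omega>') l)))"
    using Suc.IH[of _ "Suc n"] space_eP[OF Suc.prems] by (intro bind_cong) (simp_all del: upt_Suc)
  also have "\<dots> = step_kernel V1 \<delta> \<sigma> v n \<omega> \<bind> (\<lambda>x. measure_pmf (map_pmf
                    (append (?pre (Suc n) (fun_upd \<omega> n x)))
                    (future_pmf V1 \<delta> \<sigma> v (?pre (Suc n) (fun_upd \<omega> n x)) l)))"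
    unfolding eP_def
  proof (rule bind_distr[where K="count_space UNIV"])
    show "fun_upd \<omega> n
        \<in> measurable (step_kernel V1 \<delta> \<sigma> v n \<omega>) (PiM {0..<Suc n} (\<lambda>_. count_space UNIV))"
      using Suc.prems by (auto simp: step_kernel_eq_next_pmf space_PiM PiE_iff extensional_def)
    show "(\<lambda>\<omega>'. measure_pmf
          (map_pmf (append (?pre (Suc n) \<omega>')) (future_pmf V1 \<delta> \<sigma> v (?pre (Suc n) \<omega>') l)))
        \<in> measurable (PiM {0..<Suc n} (\<lambda>_. count_space UNIV)) (subprob_algebra (count_space UNIV))"
      by (rule measurable_compose[OF measurable_prefix])
         (auto simp: measure_pmf_in_subprob_algebra)
  qed (simp add: step_kernel_eq_next_pmf)
  also have "\<dots> = measure_pmf (map_pmf (append (?pre n \<omega>)) (future_pmf V1 \<delta> \<sigma> v (?pre n \<omega>) (Suc l)))"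
    unfolding map_append_future_pmf_Suc by (simp add: measure_pmf_bind step_kernel_eq_next_pmf)
  finally show ?case .
qed

lemma distr_play_measure_prefix:
  fixes \<delta> :: "'v::finite \<Rightarrow> 'v pmf"
  shows "distr (play_measure V1 \<delta> \<sigma> v) (count_space UNIV) (\<lambda>\<rho>. map \<rho> [0..<n])
     = measure_pmf (future_pmf V1 \<delta> \<sigma> v [] n)"
proof -
  interpret Ionescu_Tulcea "step_kernel V1 \<delta> \<sigma> v" "\<lambda>_. count_space UNIV"
    by (rule Ionescu_Tulcea_step_kernel)
  let ?Pi = "PiM {0..<n} (\<lambda>_. count_space UNIV)"
  have up_to_n: "up_to {0..<n} = n"
    using up_to_iff_Ico[of "{0..<n}"]
    by (metis finite_atLeastLessThan order_refl le_antisym ivl_subset zero_le)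
  have "distr PF.lim (count_space UNIV) (\<lambda>\<rho>. map \<rho> [0..<n])
      = distr (distr PF.lim ?Pi (\<lambda>x. restrict x {0..<n})) (count_space UNIV) (\<lambda>\<rho>. map \<rho> [0..<n])"
  proof (subst distr_distr)
    show "(\<lambda>x. restrict x {0..<n}) \<in> measurable PF.lim ?Pi"
      unfolding measurable_cong_sets[OF PF.sets_lim refl] by (rule measurable_restrict) simp
  qed (auto simp: comp_def measurable_prefix intro!: distr_cong map_cong)
  also have "\<dots> = distr (CI {0..<n}) (count_space UNIV) (\<lambda>\<rho>. map \<rho> [0..<n])"
    by (simp add: distr_lim)
  also have "\<dots> = distr (C 0 n (\<lambda>x. undefined)) (count_space UNIV) (\<lambda>\<rho>. map \<rho> [0..<n])"
    unfolding CI_def up_to_n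
  proof (subst distr_distr)
    show "(\<lambda>x. restrict x {0..<n}) \<in> measurable (C 0 n (\<lambda>x. undefined)) ?Pi"
      unfolding measurable_cong_sets[OF sets_C[of "\<lambda>x. undefined" 0] refl]
      by (rule measurable_restrict) (simp_all add: space_PiM)
  qed (auto simp: comp_def measurable_prefix intro!: distr_cong map_cong)
  also have "\<dots> = measure_pmf (future_pmf V1 \<delta> \<sigma> v [] n)"
    using distr_C_prefix[of "\<lambda>x. undefined" 0 V1 \<delta> \<sigma> v n]
    by (simp add: space_PiM append_Nil[abs_def])
  finally show ?thesis
    by (simp add: play_measure_def)
qed

lemma space_play_measure [simp]:
  fixes \<delta> :: "'v::finite \<Rightarrow> 'v pmf"
  shows "space (play_measure V1 \<delta> \<sigma> v) = UNIV"
proof -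
  interpret Ionescu_Tulcea "step_kernel V1 \<delta> \<sigma> v" "\<lambda>_. count_space UNIV"
    by (rule Ionescu_Tulcea_step_kernel)
  show ?thesis
    by (simp add: play_measure_def space_PiM)
qed

lemma measurable_play_prefix:
  fixes \<delta> :: "'v::finite \<Rightarrow> 'v pmf"
  shows "(\<lambda>\<rho>. map \<rho> [0..<n]) \<in> measurable (play_measure V1 \<delta> \<sigma> v) (count_space UNIV)"
proof -
  interpret Ionescu_Tulcea "step_kernel V1 \<delta> \<sigma> v" "\<lambda>_. count_space UNIV"
    by (rule Ionescu_Tulcea_step_kernel)
  show ?thesis
    unfolding play_measure_def measurable_cong_sets[OF PF.sets_lim refl]
    by (rule measurable_prefix) simp
qed

lemma sets_play_prefix:
  fixes \<delta> :: "'v::finite \<Rightarrow> 'v pmf"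
  shows "{\<rho>. Q (map \<rho> [0..<n])} \<in> sets (play_measure V1 \<delta> \<sigma> v)"
  using measurable_sets[OF measurable_play_prefix, of "{xs. Q xs}"] by (simp add: vimage_def)

lemma measure_play_prefix:
  fixes \<delta> :: "'v::finite \<Rightarrow> 'v pmf"
  shows "measure (play_measure V1 \<delta> \<sigma> v) {\<rho>. Q (map \<rho> [0..<n])}
     = measure_pmf.prob (future_pmf V1 \<delta> \<sigma> v [] n) {xs. Q xs}"
  unfolding distr_play_measure_prefix[symmetric]
  by (subst measure_distr) (auto simp: measurable_play_prefix vimage_def)

lemma prob_space_play_measure:
  fixes \<delta> :: "'v::finite \<Rightarrow> 'v pmf"
  shows "prob_space (play_measure V1 \<delta> \<sigma> v)"
proof (rule prob_spaceI)
  have "emeasure (distr (play_measure V1 \<delta> \<sigma> v) (count_space UNIV) (\<lambda>\<rho>. map \<rho> [0..<0])) UNIV = 1"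
    unfolding distr_play_measure_prefix by (simp add: measure_pmf.emeasure_space_1[simplified])
  then show "emeasure (play_measure V1 \<delta> \<sigma> v) (space (play_measure V1 \<delta> \<sigma> v)) = 1"
    by (subst (asm) emeasure_distr) auto
qed

lemma history_snoc:
  assumes "history E h" and "(last h, y) \<in> E"
  shows "history E (h @ [y])"
  unfolding history_def
proof (intro conjI allI impI)
  fix i assume i: "Suc i < length (h @ [y])"
  show "((h @ [y]) ! i, (h @ [y]) ! Suc i) \<in> E"
  proof (cases "Suc i < length h")
    case True
    then show ?thesis
      using assms(1) by (simp add: history_def nth_append)
  next
    case False
    then have "i = length h - 1" "h \<noteq> []"
      using i assms(1) by (auto simp: history_def)
    then show ?thesis
      using assms(2) by (simp add: nth_append last_conv_nth)
  qed
qed simp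

lemma prob_bind_pmf_finite:
  fixes M :: "'a::finite pmf"
  shows "measure_pmf.prob (M \<bind> N) X = (\<Sum>x\<in>UNIV. pmf M x * measure_pmf.prob (N x) X)"
proof -
  have "emeasure (measure_pmf (M \<bind> N)) X = (\<Sum>x\<in>set_pmf M. emeasure (N x) X * pmf M x)"
    by (simp add: nn_integral_measure_pmf_finite)
  also have "\<dots> = (\<Sum>x\<in>UNIV. ennreal (pmf M x * measure_pmf.prob (N x) X))"
    by (rule sum.mono_neutral_cong_left)
       (auto simp: measure_pmf.emeasure_eq_measure set_pmf_eq ennreal_mult mult.commute)
  finally show ?thesis
    by (simp add: measure_pmf.emeasure_eq_measure sum_nonneg)
qed

lemma sum_pmf_mono:
  fixes q :: "'a::finite pmf"
  assumes "\<And>x. x \<in> set_pmf q \<Longrightarrow> f x \<le> g x"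
  shows "(\<Sum>x\<in>UNIV. pmf q x * f x) \<le> (\<Sum>x\<in>UNIV. pmf q x * g x)"
proof (rule sum_mono)
  fix x
  show "pmf q x * f x \<le> pmf q x * g x"
    using assms[of x] by (cases "x \<in> set_pmf q") (auto simp: set_pmf_iff intro!: mult_left_mono)
qed

lemma sum_pmf_const [simp]:
  fixes q :: "'a::finite pmf"
  shows "(\<Sum>x\<in>UNIV. pmf q x * c) = c"
  by (simp add: sum_distrib_right[symmetric] sum_pmf_eq_1)

lemma sum_pmf_eq_bound:
  fixes q :: "'a::finite pmf"
  assumes "c \<le> (\<Sum>y\<in>UNIV. pmf q y * f y)" and "\<And>y. y \<in> set_pmf q \<Longrightarrow> f y \<le> c"
    and "x \<in> set_pmf q"
  shows "f x = c"
proof -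
  have nonneg: "0 \<le> pmf q y * (c - f y)" for y
    using assms(2)[of y] by (cases "y \<in> set_pmf q") (auto simp: set_pmf_iff)
  have "(\<Sum>y\<in>UNIV. pmf q y * (c - f y)) = c - (\<Sum>y\<in>UNIV. pmf q y * f y)"
    by (simp add: right_diff_distrib sum_subtractf)
  also have "\<dots> \<le> 0"
    using assms(1) by simp
  finally have "(\<Sum>y\<in>UNIV. pmf q y * (c - f y)) = 0"
    using nonneg by (simp add: antisym sum_nonneg)
  then have "pmf q x * (c - f x) = 0"
    using nonneg by (simp add: sum_nonneg_eq_0_iff)
  then show ?thesis
    using assms(3) by (auto simp: set_pmf_iff)
qed

lemma tendsto_Max_image:
  fixes f :: "nat \<Rightarrow> 'a \<Rightarrow> real"
  assumes "finite K" and "K \<noteq> {}" and "\<And>y. y \<in> K \<Longrightarrow> (\<lambda>n. f n y) \<longlonglongrightarrow> l y"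
  shows "(\<lambda>n. Max (f n ` K)) \<longlonglongrightarrow> Max (l ` K)"
  using tendsto_Sup[of K f l sequentially] assms by (simp add: cSup_eq_Max)

section \<open>Unlucky prefixes\<close>

fun unlucky_prefix :: "('v \<Rightarrow> nat) \<Rightarrow> nat \<Rightarrow> nat \<Rightarrow> 'v list \<Rightarrow> bool" where
  "unlucky_prefix \<Omega> p 0 xs = True"
| "unlucky_prefix \<Omega> p (Suc N) [] = False"
| "unlucky_prefix \<Omega> p (Suc N) (x # xs) =
     (if p < \<Omega> x then False
      else if \<Omega> x = p then unlucky_prefix \<Omega> p N xs
      else unlucky_prefix \<Omega> p (Suc N) xs)"

lemma unlucky_prefix_iff:
  "unlucky_prefix \<Omega> p N xs \<longleftrightarrow>
     N \<le> length (filter ((\<le>) p) (map \<Omega> xs)) \<and> take N (filter ((\<le>) p) (map \<Omega> xs)) = replicate N p"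
proof (induction xs arbitrary: N)
  case Nil
  then show ?case by (cases N) auto
next
  case (Cons x xs)
  then show ?case
    by (cases N; cases "p < \<Omega> x"; cases "\<Omega> x = p") auto
qed

lemma unlucky_prefix_append: "unlucky_prefix \<Omega> p N xs \<Longrightarrow> unlucky_prefix \<Omega> p N (xs @ ys)"
  by (induction \<Omega> p N xs rule: unlucky_prefix.induct) (auto split: if_splits)

lemma unlucky_prefix_count:
  "unlucky_prefix \<Omega> p N xs \<Longrightarrow> N \<le> length (filter (\<lambda>x. \<Omega> x = p) xs)"
  by (induction \<Omega> p N xs rule: unlucky_prefix.induct) (auto split: if_splits)

lemma unlucky_prefix_before_above:
  "unlucky_prefix \<Omega> p N xs \<Longrightarrow> i < length xs \<Longrightarrow> p < \<Omega> (xs ! i) \<Longrightarrow> N \<le> i"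
proof (induction \<Omega> p N xs arbitrary: i rule: unlucky_prefix.induct)
  case (3 \<Omega> p N x xs)
  then show ?case
    by (cases i) (force split: if_splits)+
qed auto

lemma Unlucky_eq_UN_prefix:
  "Unlucky \<Omega> p N = (\<Union>k. {\<rho>. unlucky_prefix \<Omega> p N (map \<rho> [0..<k])})"
  unfolding Unlucky_def prio_filter_prefix_def unlucky_prefix_iff by (auto simp: comp_def)

lemma nat_limsup_eq_if_Unlucky_all:
  assumes unlucky: "\<And>N. \<rho> \<in> Unlucky \<Omega> p N"
  shows "nat_limsup (\<lambda>j. \<Omega> (\<rho> j)) = p"
proof -
  have count: "N \<le> length (filter (\<lambda>x. \<Omega> x = p) (map \<rho> [0..<k]))"
    if "unlucky_prefix \<Omega> p N (map \<rho> [0..<k])" for N k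
    using unlucky_prefix_count[OF that] .
  have le_p: "\<Omega> (\<rho> j) \<le> p" for j
  proof (rule ccontr)
    assume above: "\<not> \<Omega> (\<rho> j) \<le> p"
    obtain k where k: "unlucky_prefix \<Omega> p (Suc j) (map \<rho> [0..<k])"
      using unlucky[of "Suc j"] unfolding Unlucky_eq_UN_prefix by auto
    have "Suc j \<le> k"
      using count[OF k] by (metis le_trans length_filter_le length_map length_upt diff_zero)
    then show False
      using unlucky_prefix_before_above[OF k, of j] above by simp
  qed
  have p_again: "\<exists>j\<ge>n. \<Omega> (\<rho> j) = p" for n
  proof (rule ccontr)
    assume none: "\<not> (\<exists>j\<ge>n. \<Omega> (\<rho> j) = p)"
    obtain k where k: "unlucky_prefix \<Omega> p (Suc n) (map \<rho> [0..<k])"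
      using unlucky[of "Suc n"] unfolding Unlucky_eq_UN_prefix by auto
    have "{i. i < k \<and> \<Omega> (map \<rho> [0..<k] ! i) = p} = {i. i < k \<and> \<Omega> (\<rho> i) = p}"
      by auto
    then have "Suc n \<le> card {i. i < k \<and> \<Omega> (\<rho> i) = p}"
      using count[OF k] by (simp add: length_filter_conv_card)
    also have "\<dots> \<le> card {0..<n}"
      using none by (intro card_mono) (auto simp: not_le[symmetric])
    finally show False by simp
  qed
  show ?thesis
    unfolding nat_limsup_def
  proof (rule Least_equality)
    show "\<forall>\<^sub>F j in sequentially. \<Omega> (\<rho> j) \<le> p"
      using le_p by simp
  next
    fix b assume "\<forall>\<^sub>F j in sequentially. \<Omega> (\<rho> j) \<le> b"
    then obtain n where "\<forall>j\<ge>n. \<Omega> (\<rho> j) \<le> b"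
      by (auto simp: eventually_sequentially)
    then show "p \<le> b"
      using p_again[of n] by auto
  qed
qed

text \<open>If F N' x is the probability that the vertices following x form an unlucky prefix for N',
  then after_visit F N x is that probability for x followed by them.\<close>
definition after_visit :: "('v \<Rightarrow> nat) \<Rightarrow> nat \<Rightarrow> (nat \<Rightarrow> 'v \<Rightarrow> real) \<Rightarrow> nat \<Rightarrow> 'v \<Rightarrow> real" where
  "after_visit \<Omega> p F N x =
     (if N = 0 then 1 else if p < \<Omega> x then 0 else if \<Omega> x = p then F (N - 1) x else F N x)"

lemma after_visit_mono:
  "(\<And>N'. F N' x \<le> G N' x) \<Longrightarrow> after_visit \<Omega> p F N x \<le> after_visit \<Omega> p G N x"
  unfolding after_visit_def by auto

lemma tendsto_after_visit:
  "(\<And>N'. (\<lambda>k. F k N' x) \<longlonglongrightarrow> G N' x) \<Longrightarrow> (\<lambda>k. after_visit \<Omega> p (F k) N x) \<longlonglongrightarrow> after_visit \<Omega> p G N x"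
  unfolding after_visit_def by auto

definition unlucky_prob :: "('v \<Rightarrow> nat) \<Rightarrow> nat \<Rightarrow> nat \<Rightarrow> 'v list pmf \<Rightarrow> real" where
  "unlucky_prob \<Omega> p N M = measure_pmf.prob M {xs. unlucky_prefix \<Omega> p N xs}"

lemma unlucky_prob_bounds: "0 \<le> unlucky_prob \<Omega> p N M" "unlucky_prob \<Omega> p N M \<le> 1"
  by (simp_all add: unlucky_prob_def)

lemma unlucky_prob_0 [simp]: "unlucky_prob \<Omega> p 0 M = 1"
  by (simp add: unlucky_prob_def)

lemma unlucky_prob_return_Nil [simp]:
  "unlucky_prob \<Omega> p N (return_pmf []) = (if N = 0 then 1 else 0)"
  by (cases N) (simp_all add: unlucky_prob_def)

lemma unlucky_prob_Cons:
  "unlucky_prob \<Omega> p N (map_pmf (Cons x) M) = after_visit \<Omega> p (\<lambda>N' _. unlucky_prob \<Omega> p N' M) N x"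
  by (cases N) (auto simp: unlucky_prob_def after_visit_def vimage_def)

lemma unlucky_prob_bind_Cons:
  fixes M :: "'v::finite pmf"
  shows "unlucky_prob \<Omega> p N (M \<bind> (\<lambda>y. map_pmf (Cons y) (Q y)))
     = (\<Sum>y\<in>UNIV. pmf M y * after_visit \<Omega> p (\<lambda>N' y. unlucky_prob \<Omega> p N' (Q y)) N y)"
  using unlucky_prob_Cons[of \<Omega> p N] unfolding unlucky_prob_def prob_bind_pmf_finite
  by (simp add: after_visit_def)

lemma tendsto_measure_play_Unlucky:
  fixes \<delta> :: "'v::finite \<Rightarrow> 'v pmf"
  shows "(\<lambda>k. unlucky_prob \<Omega> p N (future_pmf V1 \<delta> \<sigma> v [] k))
           \<longlonglongrightarrow> measure (play_measure V1 \<delta> \<sigma> v) (Unlucky \<Omega> p N)"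
proof -
  interpret prob_space "play_measure V1 \<delta> \<sigma> v"
    by (rule prob_space_play_measure)
  have "(\<lambda>k. measure (play_measure V1 \<delta> \<sigma> v) {\<rho>. unlucky_prefix \<Omega> p N (map \<rho> [0..<k])})
          \<longlonglongrightarrow> measure (play_measure V1 \<delta> \<sigma> v) (\<Union>k. {\<rho>. unlucky_prefix \<Omega> p N (map \<rho> [0..<k])})"
  proof (rule Lim_measure_incseq)
    show "incseq (\<lambda>k. {\<rho>. unlucky_prefix \<Omega> p N (map \<rho> [0..<k])})"
      by (auto simp: incseq_Suc_iff intro: unlucky_prefix_append)
  qed (auto simp: sets_play_prefix)
  then show ?thesis
    by (simp add: measure_play_prefix unlucky_prob_def Unlucky_eq_UN_prefix)
qed

section \<open>Markov chains walking down to priority p\<close>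

text \<open>A maximiser of F on Z would only move to maximisers outside A, so the descent of d along
  such moves could never end.\<close>
lemma le_0_if_le_average_outside:
  fixes T :: "'v::finite \<Rightarrow> 'v pmf" and d :: "'v \<Rightarrow> nat" and F :: "'v \<Rightarrow> real"
  assumes closed: "\<And>x. x \<in> Z \<Longrightarrow> set_pmf (T x) \<subseteq> Z"
    and descent: "\<And>x. x \<in> Z \<Longrightarrow> x \<notin> A \<Longrightarrow> \<exists>y\<in>set_pmf (T x). d y < d x"
    and le_average: "\<And>x. x \<in> Z \<Longrightarrow> F x \<le> (\<Sum>y\<in>UNIV. pmf (T x) y * (if y \<in> A then 0 else F y))"
    and "x \<in> Z"
  shows "F x \<le> 0"
proof (rule ccontr)
  assume "\<not> F x \<le> 0"
  define c where "c = Max (F ` Z)"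
  have le_c: "F y \<le> c" if "y \<in> Z" for y
    unfolding c_def using that by (intro Max_ge) auto
  have "c > 0"
    using le_c[OF \<open>x \<in> Z\<close>] \<open>\<not> F x \<le> 0\<close> by linarith
  have "c \<in> F ` Z"
    unfolding c_def using \<open>x \<in> Z\<close> by (intro Max_in) auto
  then obtain x0 where x0: "x0 \<in> Z" "F x0 = c"
    by auto
  define Y where "Y = {y \<in> Z. F y = c}"
  have step: "y \<in> Y \<and> y \<notin> A" if "x \<in> Y" "y \<in> set_pmf (T x)" for x y
  proof -
    have "x \<in> Z" "F x = c"
      using that(1) by (auto simp: Y_def)
    have "(if y \<in> A then 0 else F y) = c"
    proof (rule sum_pmf_eq_bound[OF _ _ that(2)])
      show "c \<le> (\<Sum>y\<in>UNIV. pmf (T x) y * (if y \<in> A then 0 else F y))"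
        using le_average[OF \<open>x \<in> Z\<close>] \<open>F x = c\<close> by simp
      show "(if z \<in> A then 0 else F z) \<le> c" if "z \<in> set_pmf (T x)" for z
        using closed[OF \<open>x \<in> Z\<close>] that le_c \<open>c > 0\<close> by auto
    qed
    then show ?thesis
      using \<open>c > 0\<close> closed[OF \<open>x \<in> Z\<close>] that(2) by (auto simp: Y_def split: if_splits)
  qed
  obtain y0 where "y0 \<in> set_pmf (T x0)"
    using set_pmf_not_empty[of "T x0"] by blast
  then have "y0 \<in> Y - A"
    using step[of x0 y0] x0 by (simp add: Y_def)
  then obtain y where y: "y \<in> Y - A" and least: "\<And>z. z \<in> Y - A \<Longrightarrow> d y \<le> d z"
    using ex_has_least_nat[of "\<lambda>z. z \<in> Y - A" y0 d] by blast
  then obtain z where "z \<in> set_pmf (T y)" "d z < d y"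
    using descent[of y] by (auto simp: Y_def)
  then show False
    using step[of y z] y least[of z] by auto
qed

primrec chain_pmf :: "('v \<Rightarrow> 'v pmf) \<Rightarrow> 'v \<Rightarrow> nat \<Rightarrow> 'v list pmf" where
  "chain_pmf T x 0 = return_pmf []"
| "chain_pmf T x (Suc k) = T x \<bind> (\<lambda>y. map_pmf (Cons y) (chain_pmf T y k))"

lemma unlucky_prob_chain_Suc:
  fixes T :: "'v::finite \<Rightarrow> 'v pmf"
  shows "unlucky_prob \<Omega> p N (chain_pmf T x (Suc k))
    = (\<Sum>y\<in>UNIV. pmf (T x) y * after_visit \<Omega> p (\<lambda>N' y. unlucky_prob \<Omega> p N' (chain_pmf T y k)) N y)"
  by (simp add: unlucky_prob_bind_Cons)

lemma unlucky_prob_chain_mono: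
  fixes T :: "'v::finite \<Rightarrow> 'v pmf"
  shows "unlucky_prob \<Omega> p N (chain_pmf T x k) \<le> unlucky_prob \<Omega> p N (chain_pmf T x (Suc k))"
proof (induction k arbitrary: N x)
  case 0
  then show ?case
    using unlucky_prob_bounds(1)[of \<Omega> p N] by (cases N) auto
next
  case (Suc k)
  show ?case
    unfolding unlucky_prob_chain_Suc[of \<Omega> p N T x]
    by (intro sum_pmf_mono after_visit_mono Suc.IH)
qed

definition chain_unlucky_lim :: "('v \<Rightarrow> nat) \<Rightarrow> nat \<Rightarrow> ('v \<Rightarrow> 'v pmf) \<Rightarrow> nat \<Rightarrow> 'v \<Rightarrow> real" where
  "chain_unlucky_lim \<Omega> p T N x = (SUP k. unlucky_prob \<Omega> p N (chain_pmf T x k))"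

lemma bdd_above_unlucky_prob: "bdd_above (range (\<lambda>k. unlucky_prob \<Omega> p N (M k)))"
  using unlucky_prob_bounds(2) by (intro bdd_aboveI[where M=1]) auto

lemma unlucky_prob_chain_tendsto_lim:
  fixes T :: "'v::finite \<Rightarrow> 'v pmf"
  shows "(\<lambda>k. unlucky_prob \<Omega> p N (chain_pmf T x k)) \<longlonglongrightarrow> chain_unlucky_lim \<Omega> p T N x"
  unfolding chain_unlucky_lim_def
  by (intro LIMSEQ_incseq_SUP bdd_above_unlucky_prob incseq_SucI unlucky_prob_chain_mono)

lemma chain_unlucky_lim_le_1: "chain_unlucky_lim \<Omega> p T N x \<le> 1"
  unfolding chain_unlucky_lim_def using unlucky_prob_bounds(2) by (auto intro!: cSUP_least)

lemma sum_after_visit_chain_unlucky_lim_le: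
  fixes T :: "'v::finite \<Rightarrow> 'v pmf"
  shows "(\<Sum>y\<in>UNIV. pmf (T x) y * after_visit \<Omega> p (chain_unlucky_lim \<Omega> p T) N y)
      \<le> chain_unlucky_lim \<Omega> p T N x"
proof (rule LIMSEQ_le_const2)
  show "(\<lambda>k. unlucky_prob \<Omega> p N (chain_pmf T x (Suc k)))
      \<longlonglongrightarrow> (\<Sum>y\<in>UNIV. pmf (T x) y * after_visit \<Omega> p (chain_unlucky_lim \<Omega> p T) N y)"
    unfolding unlucky_prob_chain_Suc
    by (intro tendsto_intros tendsto_after_visit unlucky_prob_chain_tendsto_lim)
  show "\<exists>K. \<forall>k\<ge>K. unlucky_prob \<Omega> p N (chain_pmf T x (Suc k)) \<le> chain_unlucky_lim \<Omega> p T N x"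
    unfolding chain_unlucky_lim_def
    by (auto intro!: cSUP_upper[OF _ bdd_above_unlucky_prob] simp del: chain_pmf.simps)
qed

text \<open>Once the claim holds for N, the deficit 1 - chain_unlucky_lim (Suc N) is bounded by its
  average away from priority p, so it vanishes by le_0_if_le_average_outside.\<close>
lemma chain_unlucky_lim_eq_1:
  fixes T :: "'v::finite \<Rightarrow> 'v pmf" and d :: "'v \<Rightarrow> nat"
  assumes closed: "\<And>x. x \<in> Z \<Longrightarrow> set_pmf (T x) \<subseteq> Z"
    and not_above: "\<And>x. x \<in> Z \<Longrightarrow> \<not> p < \<Omega> x"
    and descent: "\<And>x. x \<in> Z \<Longrightarrow> \<Omega> x \<noteq> p \<Longrightarrow> \<exists>y\<in>set_pmf (T x). d y < d x"
  shows "\<forall>x\<in>Z. chain_unlucky_lim \<Omega> p T N x = 1"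
proof (induction N)
  case 0
  then show ?case
    by (simp add: chain_unlucky_lim_def)
next
  case (Suc N)
  let ?L = "chain_unlucky_lim \<Omega> p T"
  have deficit: "1 - ?L (Suc N) x \<le> 0" if "x \<in> Z" for x
  proof (rule le_0_if_le_average_outside[where A="{y. \<Omega> y = p}", OF closed _ _ that])
    show "\<exists>y\<in>set_pmf (T x). d y < d x" if "x \<in> Z" "x \<notin> {y. \<Omega> y = p}" for x
      using descent that by simp
    fix x assume "x \<in> Z"
    let ?F = "\<lambda>y. if y \<in> {y. \<Omega> y = p} then 0 else 1 - ?L (Suc N) y"
    have "after_visit \<Omega> p ?L (Suc N) y = 1 - ?F y" if "y \<in> set_pmf (T x)" for y
      using Suc.IH closed[OF \<open>x \<in> Z\<close>] not_above that by (auto simp: after_visit_def)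
    then have "(\<Sum>y\<in>UNIV. pmf (T x) y * after_visit \<Omega> p ?L (Suc N) y)
        = (\<Sum>y\<in>UNIV. pmf (T x) y * (1 - ?F y))"
      by (intro sum.cong refl) (metis mult_zero_left set_pmf_iff)
    also have "\<dots> = 1 - (\<Sum>y\<in>UNIV. pmf (T x) y * ?F y)"
      by (simp add: right_diff_distrib sum_subtractf sum_pmf_eq_1)
    finally show "1 - ?L (Suc N) x \<le> (\<Sum>y\<in>UNIV. pmf (T x) y * ?F y)"
      using sum_after_visit_chain_unlucky_lim_le[where \<Omega>=\<Omega> and p=p and T=T and x=x and N="Suc N"]
      by linarith
  qed
  show ?case
    using deficit chain_unlucky_lim_le_1[of \<Omega> p T "Suc N"] by (auto intro: order_antisym)
qed

lemma future_pmf_positional: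
  assumes "h \<noteq> []"
  shows "future_pmf V1 \<delta> (\<lambda>h. ch (last h)) v h k
       = chain_pmf (\<lambda>x. next_pmf V1 \<delta> (\<lambda>h. ch (last h)) v [x]) (last h) k"
  using assms
proof (induction k arbitrary: h)
  case (Suc k)
  have "next_pmf V1 \<delta> (\<lambda>h. ch (last h)) v h = next_pmf V1 \<delta> (\<lambda>h. ch (last h)) v [last h]"
    using Suc.prems by (simp add: next_pmf_def)
  then show ?case
    using Suc.IH[of "h @ [_]"] by simp
qed simp

lemma rtrancl_descent:
  assumes "\<And>x. x \<in> S \<Longrightarrow> \<exists>w\<in>A. (x, w) \<in> R\<^sup>*"
  obtains d :: "'a \<Rightarrow> nat" where "\<And>x. x \<in> S \<Longrightarrow> x \<notin> A \<Longrightarrow> \<exists>y. (x, y) \<in> R \<and> d y < d x"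
proof -
  define d where "d x = (LEAST j. \<exists>w\<in>A. (x, w) \<in> R ^^ j)" for x
  have "\<exists>y. (x, y) \<in> R \<and> d y < d x" if "x \<in> S" "x \<notin> A" for x
  proof -
    have "\<exists>j. \<exists>w\<in>A. (x, w) \<in> R ^^ j"
      using assms[OF \<open>x \<in> S\<close>] rtrancl_power by blast
    then have "\<exists>w\<in>A. (x, w) \<in> R ^^ d x"
      unfolding d_def by (rule LeastI_ex)
    then obtain w where w: "w \<in> A" "(x, w) \<in> R ^^ d x"
      by blast
    then obtain j where j: "d x = Suc j"
      using \<open>x \<notin> A\<close> by (cases "d x") auto
    then obtain y where y: "(x, y) \<in> R" "(y, w) \<in> R ^^ j"
      using w relpow_Suc_D2 by metis
    have "d y \<le> j"
      unfolding d_def using y w by (intro Least_le) blast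
    then show ?thesis
      using y j by auto
  qed
  then show thesis
    by (rule that)
qed

section \<open>Value iteration\<close>

locale mdp_unlucky =
  fixes E :: "('v::finite \<times> 'v) set" and V1 :: "'v set" and \<delta> :: "'v \<Rightarrow> 'v pmf"
    and \<Omega> :: "'v \<Rightarrow> nat" and p :: nat
  assumes mdp: "mdp E V1 \<delta>"
begin

definition successors :: "'v \<Rightarrow> 'v set" where
  "successors u = {w. (u, w) \<in> E}"

lemma successors_nonempty: "successors u \<noteq> {}"
  using mdp unfolding mdp_def successors_def by auto

lemma set_pmf_delta: "u \<notin> V1 \<Longrightarrow> set_pmf (\<delta> u) = successors u"
  using mdp unfolding mdp_def successors_def by auto

definition bellman :: "'v \<Rightarrow> ('v \<Rightarrow> real) \<Rightarrow> real" where
  "bellman u f = (if u \<in> V1 then Max (f ` successors u) else (\<Sum>x\<in>UNIV. pmf (\<delta> u) x * f x))"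

lemma bellman_mono:
  assumes "\<And>x. x \<in> successors u \<Longrightarrow> f x \<le> g x"
  shows "bellman u f \<le> bellman u g"
proof (cases "u \<in> V1")
  case True
  have "f x \<le> Max (g ` successors u)" if "x \<in> successors u" for x
  proof -
    have "g x \<le> Max (g ` successors u)"
      using that by (intro Max_ge) auto
    then show ?thesis
      using assms[OF that] by linarith
  qed
  then have "Max (f ` successors u) \<le> Max (g ` successors u)"
    using successors_nonempty[of u] by (intro Max.boundedI) auto
  then show ?thesis
    using True by (simp add: bellman_def)
next
  case False
  then show ?thesis
    using assms by (auto simp: bellman_def set_pmf_delta intro!: sum_pmf_mono)
qed

lemma bellman_const [simp]: "bellman u (\<lambda>_. c) = c"
  using successors_nonempty[of u] by (simp add: bellman_def)

lemma tendsto_bellman: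
  assumes "\<And>x. (\<lambda>n. f n x) \<longlonglongrightarrow> l x"
  shows "(\<lambda>n. bellman u (f n)) \<longlonglongrightarrow> bellman u l"
proof (cases "u \<in> V1")
  case True
  then show ?thesis
    using assms successors_nonempty[of u] by (simp add: bellman_def tendsto_Max_image)
next
  case False
  then show ?thesis
    using assms by (simp add: bellman_def tendsto_intros)
qed

text \<open>val k N u is the optimal probability, over all strategies, that the k vertices following u
  form an unlucky prefix for N.\<close>
fun val :: "nat \<Rightarrow> nat \<Rightarrow> 'v \<Rightarrow> real" where
  "val 0 N u = (if N = 0 then 1 else 0)"
| "val (Suc k) N u = bellman u (after_visit \<Omega> p (val k) N)"

lemma val_nonneg: "0 \<le> val k N u"
proof (induction k arbitrary: N u)
  case (Suc k)
  have "0 \<le> after_visit \<Omega> p (val k) N x" for x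
    using Suc.IH by (simp add: after_visit_def)
  then show ?case
    using bellman_mono[of u "\<lambda>_. 0" "after_visit \<Omega> p (val k) N"] by simp
qed simp

lemma val_le_1: "val k N u \<le> 1"
proof (induction k arbitrary: N u)
  case (Suc k)
  have "after_visit \<Omega> p (val k) N x \<le> 1" for x
    using Suc.IH by (simp add: after_visit_def)
  then show ?case
    using bellman_mono[of u "after_visit \<Omega> p (val k) N" "\<lambda>_. 1"] by simp
qed simp

lemma val_Suc_mono: "val k N u \<le> val (Suc k) N u"
proof (induction k arbitrary: N u)
  case 0
  show ?case
    using bellman_mono[of u "\<lambda>_. 1" "after_visit \<Omega> p (val 0) N"] val_nonneg[of "Suc 0" N u]
    by (auto simp: after_visit_def)
next
  case (Suc k)
  show ?case
    using Suc.IH by (auto intro!: bellman_mono after_visit_mono simp del: val.simps(1))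
qed

lemma val_antimono: "val k (Suc N) u \<le> val k N u"
proof (induction k arbitrary: N u)
  case (Suc k)
  have "after_visit \<Omega> p (val k) (Suc N) x \<le> after_visit \<Omega> p (val k) N x" for x
    using Suc.IH[of "N - 1" x] Suc.IH[of N x] val_le_1[of k]
    by (cases N) (auto simp: after_visit_def)
  then show ?case
    by (simp add: bellman_mono)
qed simp

definition val_sup :: "nat \<Rightarrow> 'v \<Rightarrow> real" where
  "val_sup N u = (SUP k. val k N u)"

lemma bdd_above_val: "bdd_above (range (\<lambda>k. val k N u))"
  using val_le_1 by (intro bdd_aboveI[where M=1]) auto

lemma val_le_val_sup: "val k N u \<le> val_sup N u"
  unfolding val_sup_def by (rule cSUP_upper[OF _ bdd_above_val]) simp

lemma val_sup_bounds: "0 \<le> val_sup N u" "val_sup N u \<le> 1"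
  using val_le_val_sup[of 0 N u] val_nonneg[of 0 N u] val_le_1
  by (auto simp: val_sup_def intro!: cSUP_least)

lemma val_sup_antimono: "val_sup (Suc N) u \<le> val_sup N u"
  unfolding val_sup_def by (rule cSUP_mono[OF _ bdd_above_val]) (auto intro: val_antimono)

definition val_lim :: "'v \<Rightarrow> real" where
  "val_lim u = (INF N. val_sup N u)"

lemma bdd_below_val_sup: "bdd_below (range (\<lambda>N. val_sup N u))"
  using val_sup_bounds by (intro bdd_belowI[where m=0]) auto

lemma val_lim_le_val_sup: "val_lim u \<le> val_sup N u"
  unfolding val_lim_def by (rule cINF_lower[OF bdd_below_val_sup]) simp

lemma val_lim_nonneg: "0 \<le> val_lim u"
  unfolding val_lim_def using val_sup_bounds by (auto intro!: cINF_greatest)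

lemma val_sup_tendsto_val_lim: "(\<lambda>N. val_sup N u) \<longlonglongrightarrow> val_lim u"
  unfolding val_lim_def
  by (intro LIMSEQ_decseq_INF[OF bdd_below_val_sup] decseq_SucI val_sup_antimono)

definition entry_val :: "'v \<Rightarrow> real" where
  "entry_val x = (if p < \<Omega> x then 0 else val_lim x)"

lemma entry_val_nonneg: "0 \<le> entry_val x"
  using val_lim_nonneg by (simp add: entry_val_def)

lemma after_visit_val_sup_tendsto: "(\<lambda>N. after_visit \<Omega> p val_sup (Suc N) x) \<longlonglongrightarrow> entry_val x"
  using val_sup_tendsto_val_lim[of x] LIMSEQ_Suc[OF val_sup_tendsto_val_lim[of x]]
  by (cases "p < \<Omega> x"; cases "\<Omega> x = p") (simp_all add: after_visit_def entry_val_def)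

lemma val_sup_Suc_le_bellman: "val_sup (Suc N) u \<le> bellman u (after_visit \<Omega> p val_sup (Suc N))"
  unfolding val_sup_def[of "Suc N"]
proof (rule cSUP_least)
  fix k
  show "val k (Suc N) u \<le> bellman u (after_visit \<Omega> p val_sup (Suc N))"
  proof (cases k)
    case 0
    then show ?thesis
      using bellman_mono[of u "\<lambda>_. 0"] val_sup_bounds(1) by (simp add: after_visit_def)
  next
    case (Suc k')
    then show ?thesis
      by (auto intro!: bellman_mono after_visit_mono val_le_val_sup)
  qed
qed simp

lemma val_lim_le_bellman: "val_lim u \<le> bellman u entry_val"
proof (rule LIMSEQ_le_const)
  show "(\<lambda>N. bellman u (after_visit \<Omega> p val_sup (Suc N))) \<longlonglongrightarrow> bellman u entry_val"
    by (intro tendsto_bellman after_visit_val_sup_tendsto)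
  show "\<exists>N0. \<forall>N\<ge>N0. val_lim u \<le> bellman u (after_visit \<Omega> p val_sup (Suc N))"
    using val_lim_le_val_sup val_sup_Suc_le_bellman order_trans by blast
qed

lemma sum_next_pmf_le_bellman:
  assumes "strategy E V1 \<sigma>" and "history E h"
  shows "(\<Sum>y\<in>UNIV. pmf (next_pmf V1 \<delta> \<sigma> v h) y * f y) \<le> bellman (last h) f"
proof -
  have "h \<noteq> []"
    using assms(2) by (simp add: history_def)
  show ?thesis
  proof (cases "last h \<in> V1")
    case True
    then have "\<sigma> h \<in> successors (last h)"
      using assms by (simp add: strategy_def successors_def)
    then show ?thesis
      using True \<open>h \<noteq> []\<close> by (simp add: next_pmf_def bellman_def)
  next
    case False
    then show ?thesis
      using \<open>h \<noteq> []\<close> by (simp add: next_pmf_def bellman_def)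
  qed
qed

lemma set_next_pmf_successors:
  assumes "strategy E V1 \<sigma>" and "history E h" and "y \<in> set_pmf (next_pmf V1 \<delta> \<sigma> v h)"
  shows "y \<in> successors (last h)"
  using assms set_pmf_delta[of "last h"]
  by (auto simp: history_def strategy_def successors_def next_pmf_def split: if_splits)

lemma unlucky_prob_future_le_val:
  assumes "strategy E V1 \<sigma>" and "history E h"
  shows "unlucky_prob \<Omega> p N (future_pmf V1 \<delta> \<sigma> v h k) \<le> val k N (last h)"
  using assms(2)
proof (induction k arbitrary: h N)
  case (Suc k)
  have "unlucky_prob \<Omega> p N (future_pmf V1 \<delta> \<sigma> v h (Suc k))
      = (\<Sum>y\<in>UNIV. pmf (next_pmf V1 \<delta> \<sigma> v h) y *
           after_visit \<Omega> p (\<lambda>N' y. unlucky_prob \<Omega> p N' (future_pmf V1 \<delta> \<sigma> v (h @ [y]) k)) N y)"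
    by (simp add: unlucky_prob_bind_Cons)
  also have "\<dots> \<le> (\<Sum>y\<in>UNIV. pmf (next_pmf V1 \<delta> \<sigma> v h) y * after_visit \<Omega> p (val k) N y)"
  proof (intro sum_pmf_mono after_visit_mono)
    fix y N' assume "y \<in> set_pmf (next_pmf V1 \<delta> \<sigma> v h)"
    then have "history E (h @ [y])"
      using set_next_pmf_successors[OF assms(1) Suc.prems] history_snoc[OF Suc.prems]
      by (simp add: successors_def)
    then show "unlucky_prob \<Omega> p N' (future_pmf V1 \<delta> \<sigma> v (h @ [y]) k) \<le> val k N' y"
      using Suc.IH by fastforce
  qed
  also have "\<dots> \<le> val (Suc k) N (last h)"
    using sum_next_pmf_le_bellman[OF assms(1) Suc.prems] by simp
  finally show ?case .
qed simp

lemma unlucky_prob_play_le_val_sup: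
  assumes "strategy E V1 \<sigma>"
  shows "unlucky_prob \<Omega> p (Suc N) (future_pmf V1 \<delta> \<sigma> v [] k) \<le> (if p < \<Omega> v then 0 else val_sup N v)"
proof (cases k)
  case 0
  then show ?thesis
    using val_sup_bounds(1) by simp
next
  case (Suc k')
  have "unlucky_prob \<Omega> p N' (future_pmf V1 \<delta> \<sigma> v [v] k') \<le> val_sup N' v" for N'
    using unlucky_prob_future_le_val[OF assms, of "[v]" N' v k'] val_le_val_sup[of k' N' v]
    by (simp add: history_def)
  then show ?thesis
    using val_sup_antimono[of N v] unfolding Suc future_pmf_Nil_Suc unlucky_prob_Cons
    by (auto simp: after_visit_def intro: order_trans)
qed

section \<open>Traps\<close>

lemma val_sup_le_exit_bound:
  assumes inner: "\<And>y. y \<in> D \<Longrightarrow> \<not> p < \<Omega> y \<and> \<Omega> y \<noteq> p"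
    and exits: "\<And>x y. x \<in> D \<Longrightarrow> y \<in> successors x \<Longrightarrow> y \<notin> D \<Longrightarrow> after_visit \<Omega> p val_sup (Suc N) y \<le> b"
    and "0 \<le> b" and "x \<in> D"
  shows "val_sup (Suc N) x \<le> b"
proof -
  have "val k (Suc N) x \<le> b" if "x \<in> D" for k x
    using that
  proof (induction k arbitrary: x)
    case (Suc k)
    have "after_visit \<Omega> p (val k) (Suc N) y \<le> b" if "y \<in> successors x" for y
    proof (cases "y \<in> D")
      case True
      then show ?thesis
        using Suc.IH inner by (simp add: after_visit_def)
    next
      case False
      have "after_visit \<Omega> p (val k) (Suc N) y \<le> after_visit \<Omega> p val_sup (Suc N) y"
        by (intro after_visit_mono val_le_val_sup)
      then show ?thesis
        using exits[OF Suc.prems that False] by linarith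
    qed
    then show ?case
      using bellman_mono[of x _ "\<lambda>_. b"] by simp
  qed (simp add: \<open>0 \<le> b\<close>)
  then show ?thesis
    unfolding val_sup_def using \<open>x \<in> D\<close> by (intro cSUP_least) auto
qed

text \<open>Inside Z, the vertices that cannot reach p within Z form a region whose only exits leave Z,
  where entry values are below val_lim x; so values in that region stay below val_lim x too.\<close>
lemma reaches_p_if_outside_smaller:
  assumes not_above: "\<And>y. y \<in> Z \<Longrightarrow> \<not> p < \<Omega> y"
    and outside: "\<And>y. y \<notin> Z \<Longrightarrow> entry_val y < val_lim x"
    and "0 < val_lim x" and "x \<in> Z"
  shows "\<exists>w. \<Omega> w = p \<and> (x, w) \<in> (E \<inter> Z \<times> Z)\<^sup>*"
proof (rule ccontr)
  assume stuck: "\<not> ?thesis"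
  define D where "D = {y \<in> Z. \<not> (\<exists>w. \<Omega> w = p \<and> (y, w) \<in> (E \<inter> Z \<times> Z)\<^sup>*)}"
  define exit_val where
    "exit_val N y = (if y \<in> Z then 0 else after_visit \<Omega> p val_sup (Suc N) y)" for N y
  have "val_lim x \<le> Max (range (exit_val N))" for N
  proof -
    have "val_sup (Suc N) x \<le> Max (range (exit_val N))"
    proof (rule val_sup_le_exit_bound[where D=D])
      show "\<not> p < \<Omega> y \<and> \<Omega> y \<noteq> p" if "y \<in> D" for y
        using that not_above by (auto simp: D_def)
      show "after_visit \<Omega> p val_sup (Suc N) y \<le> Max (range (exit_val N))"
        if "x' \<in> D" "y \<in> successors x'" "y \<notin> D" for x' y
      proof -
        have "y \<notin> Z"
        proof
          assume "y \<in> Z"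
          then obtain w where w: "\<Omega> w = p" "(y, w) \<in> (E \<inter> Z \<times> Z)\<^sup>*"
            using \<open>y \<notin> D\<close> by (auto simp: D_def)
          have "(x', y) \<in> E \<inter> Z \<times> Z"
            using that \<open>y \<in> Z\<close> by (auto simp: D_def successors_def)
          then have "(x', w) \<in> (E \<inter> Z \<times> Z)\<^sup>*"
            using w(2) by (rule converse_rtrancl_into_rtrancl)
          then show False
            using \<open>x' \<in> D\<close> w(1) by (auto simp: D_def)
        qed
        then have "after_visit \<Omega> p val_sup (Suc N) y = exit_val N y"
          by (simp add: exit_val_def)
        then show ?thesis
          using Max_ge[of "range (exit_val N)" "exit_val N y"] by simp
      qed
      show "0 \<le> Max (range (exit_val N))"
        using Max_ge[of "range (exit_val N)" "exit_val N x"] \<open>x \<in> Z\<close> by (simp add: exit_val_def)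
      show "x \<in> D"
        using \<open>x \<in> Z\<close> stuck by (simp add: D_def)
    qed
    then show ?thesis
      using val_lim_le_val_sup[of x "Suc N"] by linarith
  qed
  moreover have "(\<lambda>N. Max (range (exit_val N)))
      \<longlonglongrightarrow> Max (range (\<lambda>y. if y \<in> Z then 0 else entry_val y))"
    unfolding exit_val_def by (intro tendsto_Max_image) (simp_all add: after_visit_val_sup_tendsto)
  ultimately have "val_lim x \<le> Max (range (\<lambda>y. if y \<in> Z then 0 else entry_val y))"
    by (intro LIMSEQ_le_const) auto
  moreover have "Max (range (\<lambda>y. if y \<in> Z then 0 else entry_val y)) < val_lim x"
    using outside \<open>0 < val_lim x\<close> by (subst Max_less_iff) auto
  ultimately show False
    by linarith
qed

definition unlucky_trap :: "'v set \<Rightarrow> bool" where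
  "unlucky_trap Z \<longleftrightarrow> Z \<noteq> {} \<and>
     (\<forall>x\<in>Z. \<not> p < \<Omega> x) \<and>
     (\<forall>x\<in>Z. x \<notin> V1 \<longrightarrow> successors x \<subseteq> Z) \<and>
     (\<forall>x\<in>Z. x \<in> V1 \<longrightarrow> successors x \<inter> Z \<noteq> {}) \<and>
     (\<forall>x\<in>Z. \<exists>w. \<Omega> w = p \<and> (x, w) \<in> (E \<inter> Z \<times> Z)\<^sup>*)"

lemma unlucky_trap_if_entry_val_pos:
  assumes "0 < entry_val x0"
  shows "\<exists>Z. unlucky_trap Z"
proof -
  define M where "M = Max (range entry_val)"
  define Z where "Z = {x. entry_val x = M}"
  have le_M: "entry_val x \<le> M" for x
    unfolding M_def by (rule Max_ge) auto
  have "0 < M"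
    using assms le_M[of x0] by linarith
  have "M \<in> range entry_val"
    unfolding M_def by (rule Max_in) auto
  then have "Z \<noteq> {}"
    by (auto simp: Z_def)
  have in_Z: "\<not> p < \<Omega> x \<and> val_lim x = M" if "x \<in> Z" for x
    using that \<open>0 < M\<close> by (auto simp: Z_def entry_val_def split: if_splits)
  have le_bellman: "M \<le> bellman x entry_val" if "x \<in> Z" for x
    using val_lim_le_bellman[of x] in_Z[OF that] by simp
  have random_closed: "successors x \<subseteq> Z" if "x \<in> Z" "x \<notin> V1" for x
  proof
    fix y assume "y \<in> successors x"
    then have "entry_val y = M"
      using le_bellman[OF \<open>x \<in> Z\<close>] \<open>x \<notin> V1\<close> le_M set_pmf_delta[OF \<open>x \<notin> V1\<close>]
      by (intro sum_pmf_eq_bound[of M "\<delta> x"]) (auto simp: bellman_def)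
    then show "y \<in> Z"
      by (simp add: Z_def)
  qed
  have player_stays: "successors x \<inter> Z \<noteq> {}" if "x \<in> Z" "x \<in> V1" for x
  proof -
    have "Max (entry_val ` successors x) \<in> entry_val ` successors x"
      using successors_nonempty by (intro Max_in) auto
    then obtain y where "y \<in> successors x" "entry_val y = Max (entry_val ` successors x)"
      by auto
    moreover have "M \<le> Max (entry_val ` successors x)"
      using le_bellman[OF \<open>x \<in> Z\<close>] \<open>x \<in> V1\<close> by (simp add: bellman_def)
    ultimately show ?thesis
      using le_M[of y] by (auto simp: Z_def)
  qed
  have reaches_p: "\<exists>w. \<Omega> w = p \<and> (x, w) \<in> (E \<inter> Z \<times> Z)\<^sup>*" if "x \<in> Z" for x
  proof (rule reaches_p_if_outside_smaller)
    show "entry_val y < val_lim x" if "y \<notin> Z" for y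
      using le_M[of y] that in_Z[OF \<open>x \<in> Z\<close>] by (auto simp: Z_def)
  qed (use in_Z \<open>0 < M\<close> that in auto)
  have "unlucky_trap Z"
    unfolding unlucky_trap_def using \<open>Z \<noteq> {}\<close>
    by (simp add: in_Z random_closed player_stays reaches_p)
  then show ?thesis ..
qed

lemma unlucky_trap_descending_choice:
  assumes "unlucky_trap Z"
  obtains ch :: "'v \<Rightarrow> 'v" and d :: "'v \<Rightarrow> nat" where "\<And>x. ch x \<in> successors x"
    and "\<And>x. x \<in> Z \<Longrightarrow> ch x \<in> Z \<and> (\<Omega> x \<noteq> p \<longrightarrow> d (ch x) < d x)"
proof -
  have random_closed: "\<And>x. x \<in> Z \<Longrightarrow> x \<notin> V1 \<Longrightarrow> successors x \<subseteq> Z"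
    and player_stays: "\<And>x. x \<in> Z \<Longrightarrow> x \<in> V1 \<Longrightarrow> successors x \<inter> Z \<noteq> {}"
    and reaches_p: "\<And>x. x \<in> Z \<Longrightarrow> \<exists>w\<in>{w. \<Omega> w = p}. (x, w) \<in> (E \<inter> Z \<times> Z)\<^sup>*"
    using assms by (auto simp: unlucky_trap_def)
  obtain d :: "'v \<Rightarrow> nat"
    where descent: "\<And>x. x \<in> Z \<Longrightarrow> \<Omega> x \<noteq> p \<Longrightarrow> \<exists>y. (x, y) \<in> E \<inter> Z \<times> Z \<and> d y < d x"
    using rtrancl_descent[OF reaches_p] by auto
  have "\<exists>y. y \<in> successors x \<and> (x \<in> Z \<longrightarrow> y \<in> Z \<and> (\<Omega> x \<noteq> p \<longrightarrow> d y < d x))" for x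
  proof (cases "x \<in> Z \<and> \<Omega> x \<noteq> p")
    case True
    then show ?thesis
      using descent[of x] by (auto simp: successors_def)
  next
    case False
    then show ?thesis
      using successors_nonempty[of x] random_closed[of x] player_stays[of x] by blast
  qed
  then show thesis
    using that by metis
qed

lemma Unlucky_almost_sure_in_trap:
  assumes "unlucky_trap Z"
  obtains \<sigma> v where "strategy E V1 \<sigma>" and "\<And>N. measure (play_measure V1 \<delta> \<sigma> v) (Unlucky \<Omega> p N) = 1"
proof -
  obtain ch and d :: "'v \<Rightarrow> nat" where ch: "\<And>x. ch x \<in> successors x"
    and ch_Z: "\<And>x. x \<in> Z \<Longrightarrow> ch x \<in> Z \<and> (\<Omega> x \<noteq> p \<longrightarrow> d (ch x) < d x)"
    using unlucky_trap_descending_choice[OF assms] by blast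
  define \<sigma> where "\<sigma> h = ch (last h)" for h :: "'v list"
  have "strategy E V1 \<sigma>"
    using ch by (simp add: strategy_def \<sigma>_def successors_def)
  obtain v where "v \<in> Z" and not_above: "\<And>x. x \<in> Z \<Longrightarrow> \<not> p < \<Omega> x"
    using assms by (auto simp: unlucky_trap_def)
  define T where "T x = next_pmf V1 \<delta> \<sigma> v [x]" for x
  have T_closed: "set_pmf (T x) \<subseteq> Z" if "x \<in> Z" for x
    using that ch_Z assms set_pmf_delta by (auto simp: T_def next_pmf_def \<sigma>_def unlucky_trap_def)
  have T_descent: "\<exists>y\<in>set_pmf (T x). d y < d x" if "x \<in> Z" "\<Omega> x \<noteq> p" for x
    using ch[of x] ch_Z[OF \<open>x \<in> Z\<close>] that set_pmf_delta[of x]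
    by (cases "x \<in> V1") (auto simp: T_def next_pmf_def \<sigma>_def)
  have "measure (play_measure V1 \<delta> \<sigma> v) (Unlucky \<Omega> p N) = 1" for N
  proof (rule LIMSEQ_unique[OF LIMSEQ_Suc[OF tendsto_measure_play_Unlucky]])
    have "future_pmf V1 \<delta> \<sigma> v [v] k = chain_pmf T v k" for k
      using future_pmf_positional[of "[v]" V1 \<delta> ch v k] by (simp add: T_def[abs_def] \<sigma>_def[abs_def])
    moreover have "(\<lambda>k. unlucky_prob \<Omega> p N' (chain_pmf T v k)) \<longlonglongrightarrow> 1" for N'
    proof -
      have "\<forall>x\<in>Z. chain_unlucky_lim \<Omega> p T N' x = 1"
        using T_closed not_above T_descent by (rule chain_unlucky_lim_eq_1)
      then have "chain_unlucky_lim \<Omega> p T N' v = 1"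
        using \<open>v \<in> Z\<close> by blast
      then show ?thesis
        using unlucky_prob_chain_tendsto_lim[of \<Omega> p N' T v] by simp
    qed
    ultimately have "(\<lambda>k. after_visit \<Omega> p
          (\<lambda>N' _. unlucky_prob \<Omega> p N' (future_pmf V1 \<delta> \<sigma> v [v] k)) N v)
        \<longlonglongrightarrow> after_visit \<Omega> p (\<lambda>_ _. 1) N v"
      by (intro tendsto_after_visit) simp
    also have "after_visit \<Omega> p (\<lambda>_ _. 1) N v = 1"
      using not_above[OF \<open>v \<in> Z\<close>] by (simp add: after_visit_def)
    finally show "(\<lambda>k. unlucky_prob \<Omega> p N (future_pmf V1 \<delta> \<sigma> v [] (Suc k))) \<longlonglongrightarrow> 1"
      unfolding future_pmf_Nil_Suc unlucky_prob_Cons .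
  qed
  then show thesis
    using that \<open>strategy E V1 \<sigma>\<close> by blast
qed

lemma entry_val_eq_0:
  assumes almost_sure: "\<forall>v \<sigma>. strategy E V1 \<sigma> \<longrightarrow> measure (play_measure V1 \<delta> \<sigma> v) (Parity \<Omega>) = 1"
    and "odd p"
  shows "entry_val x = 0"
proof (rule ccontr)
  assume "entry_val x \<noteq> 0"
  then have "0 < entry_val x"
    using entry_val_nonneg[of x] by simp
  then obtain Z where "unlucky_trap Z"
    using unlucky_trap_if_entry_val_pos by blast
  then obtain \<sigma> v where "strategy E V1 \<sigma>"
    and unlucky: "\<And>N. measure (play_measure V1 \<delta> \<sigma> v) (Unlucky \<Omega> p N) = 1"
    using Unlucky_almost_sure_in_trap by blast
  interpret prob_space "play_measure V1 \<delta> \<sigma> v"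
    by (rule prob_space_play_measure)
  have AE_if_prob_1: "AE \<rho> in play_measure V1 \<delta> \<sigma> v. \<rho> \<in> A" if "prob A = 1" for A
  proof -
    have "A \<in> events"
      using that measure_notin_sets[of A] by fastforce
    then show ?thesis
      using that prob_eq_1 by simp
  qed
  have "AE \<rho> in play_measure V1 \<delta> \<sigma> v. \<forall>N. \<rho> \<in> Unlucky \<Omega> p N"
    unfolding AE_all_countable using AE_if_prob_1 unlucky by blast
  moreover have "AE \<rho> in play_measure V1 \<delta> \<sigma> v. \<rho> \<in> Parity \<Omega>"
    using AE_if_prob_1 almost_sure \<open>strategy E V1 \<sigma>\<close> by blast
  ultimately have "AE \<rho> in play_measure V1 \<delta> \<sigma> v. False"
    by eventually_elim (use nat_limsup_eq_if_Unlucky_all \<open>odd p\<close> in \<open>auto simp: Parity_def\<close>)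
  then show False
    by (simp add: AE_False)
qed

lemma eventually_val_sup_less:
  assumes "\<And>x. entry_val x = 0" and "0 < \<epsilon>"
  shows "\<exists>N. \<forall>v. \<not> p < \<Omega> v \<longrightarrow> val_sup N v < \<epsilon>"
proof -
  have "\<forall>\<^sub>F N in sequentially. \<not> p < \<Omega> v \<longrightarrow> val_sup N v < \<epsilon>" for v
  proof (cases "p < \<Omega> v")
    case False
    then have "(\<lambda>N. val_sup N v) \<longlonglongrightarrow> 0"
      using val_sup_tendsto_val_lim[of v] assms(1)[of v] by (simp add: entry_val_def)
    then show ?thesis
      using \<open>0 < \<epsilon>\<close> by (auto dest: order_tendstoD(2))
  qed simp
  then have "\<forall>\<^sub>F N in sequentially. \<forall>v. \<not> p < \<Omega> v \<longrightarrow> val_sup N v < \<epsilon>"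
    by (rule eventually_all_finite)
  then show ?thesis
    by (auto simp: eventually_sequentially)
qed

end

theorem lemma3:
  fixes E :: "('v::finite \<times> 'v) set" and V1 :: "'v set" and \<delta> :: "'v \<Rightarrow> 'v pmf"
    and \<Omega>1 :: "'v \<Rightarrow> nat" and p :: nat and \<epsilon> :: real
  assumes "mdp E V1 \<delta>"
    and "\<forall>v \<sigma>. strategy E V1 \<sigma> \<longrightarrow> measure (play_measure V1 \<delta> \<sigma> v) (Parity \<Omega>1) = 1"
    and "odd p" and "p \<in> range \<Omega>1"
    and "\<epsilon> > 0"
  shows "\<exists>N::nat. \<forall>\<sigma> v. strategy E V1 \<sigma> \<longrightarrow>
           measure (play_measure V1 \<delta> \<sigma> v) (Unlucky \<Omega>1 p N) < \<epsilon>"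
proof -
  interpret mdp_unlucky E V1 \<delta> \<Omega>1 p
    by unfold_locales (rule assms(1))
  obtain N where N: "\<And>v. \<not> p < \<Omega>1 v \<Longrightarrow> val_sup N v < \<epsilon>"
    using eventually_val_sup_less[OF entry_val_eq_0[OF assms(2,3)] assms(5)] by blast
  show ?thesis
  proof (intro exI allI impI)
    fix \<sigma> v assume "strategy E V1 \<sigma>"
    have "measure (play_measure V1 \<delta> \<sigma> v) (Unlucky \<Omega>1 p (Suc N))
        \<le> (if p < \<Omega>1 v then 0 else val_sup N v)"
      using unlucky_prob_play_le_val_sup[OF \<open>strategy E V1 \<sigma>\<close>]
      by (intro LIMSEQ_le_const2[OF tendsto_measure_play_Unlucky]) simp
    then show "measure (play_measure V1 \<delta> \<sigma> v) (Unlucky \<Omega>1 p (Suc N)) < \<epsilon>"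
      using N[of v] assms(5) by (auto split: if_splits)
  qed
qed

end
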